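(* Let $\alpha>0$, $\lambda\in(0,1)$, and $N(\alpha,\lambda)=\max\{[\alpha/\lambda]+1,[1/(\lambda\alpha)]+1\}$, where $[x]$ is the greatest integer $\le x$. For every integer $n\ge N(\alpha,\lambda)$, $$\binom{n}{\left[\frac{\alpha(n+1)}{\alpha+1}\right]}\alpha^{\left[\frac{\alpha(n+1)}{\alpha+1}\right]}\le\frac{M(\alpha,\lambda)}{\sqrt{2\pi}}n^{-1/2}(1+\alpha)^n,\qquad\text{where } M(\alpha,\lambda)=\frac{\alpha+1}{\sqrt\alpha}\cdot\frac{1}{1-\lambda}.$$ *)

theory Defs
  imports Complex_Main
begin

definition N_bound :: "real \<Rightarrow> real \<Rightarrow> int" where
  "N_bound \<alpha> lam = max (\<lfloor>\<alpha> / lam\<rfloor> + 1) (\<lfloor>1 / (lam * \<alpha>)\<rfloor> + 1)"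

definition M_const :: "real \<Rightarrow> real \<Rightarrow> real" where
  "M_const \<alpha> lam = (\<alpha> + 1) / sqrt \<alpha> * (1 / (1 - lam))"

end

theory Submission
  imports Defs "HOL-Analysis.Analysis" "HOL-Real_Asymp.Real_Asymp"
begin

text \<open>
  Let \<open>s n = ln n! + n - (n + 1/2) ln n\<close>. Its increments
  \<open>s n - s (n + 1) = (n + 1/2) ln (1 + 1/n) - 1\<close> lie between \<open>0\<close> and \<open>1/(4n(n+1))\<close>,
  so \<open>s\<close> decreases to a finite limit, which Wallis' product identifies as \<open>ln (2\<pi>)/2\<close>.
  Writing the factorials in \<open>n choose k\<close> through \<open>s\<close> and using \<open>s n \<le> s k\<close>,
  \<open>s (n - k) \<ge> ln (2\<pi>)/2\<close> bounds \<open>n choose k\<close> by \<open>n\<^sup>n \<surd>n / (\<surd>(2\<pi>) k\<^sup>k \<surd>k m\<^sup>m \<surd>m)\<close>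
  with \<open>m = n - k\<close>. The inequality \<open>x\<^sup>k y\<^sup>m \<le> k\<^sup>k m\<^sup>m\<close> for \<open>x + y = k + m\<close>, applied to
  \<open>x = \<alpha>n/(1+\<alpha>)\<close> and \<open>y = n/(1+\<alpha>)\<close>, then gives
  \<open>(n choose k) \<alpha>\<^sup>k \<le> (1+\<alpha>)\<^sup>n \<surd>n / \<surd>(2\<pi> k m)\<close>. For \<open>k = \<lfloor>\<alpha>(n+1)/(\<alpha>+1)\<rfloor>\<close> and
  \<open>n \<ge> N(\<alpha>,\<lambda>)\<close>, \<open>k\<close> and \<open>m\<close> are at least \<open>1 - \<lambda>\<close> times \<open>\<alpha>n/(1+\<alpha>)\<close> and
  \<open>n/(1+\<alpha>)\<close> respectively, which produces the constant \<open>M(\<alpha>,\<lambda>)\<close>.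
\<close>

lemma ln_ge_two_mult_diff_div_add:
  fixes y :: real
  assumes "1 \<le> y"
  shows "2 * (y - 1) / (y + 1) \<le> ln y"
proof -
  let ?g = "\<lambda>y::real. ln y + 4 / (y + 1)"
  have "?g 1 \<le> ?g y"
  proof (rule deriv_nonneg_imp_mono[where g = ?g and g' = "\<lambda>y. 1 / y - 4 / (y + 1)\<^sup>2" and a = 1 and b = y])
    fix t :: real assume "t \<in> {1..y}"
    then have t: "1 \<le> t" by simp
    then show "(?g has_real_derivative 1 / t - 4 / (t + 1)\<^sup>2) (at t)"
      by (auto intro!: derivative_eq_intros simp: power2_eq_square)
    have "4 * t \<le> (t + 1)\<^sup>2"
      using sum_squares_ge_zero[of "t - 1" 0] by (simp add: power2_eq_square algebra_simps)
    with t show "0 \<le> 1 / t - 4 / (t + 1)\<^sup>2"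
      by (simp add: field_simps)
  qed (use assms in simp)
  moreover have "2 * (y - 1) / (y + 1) = 2 - 4 / (y + 1)"
    using assms by (simp add: field_simps)
  ultimately show ?thesis by simp
qed

lemma two_mult_ln_le_diff_inverse:
  fixes y :: real
  assumes "1 \<le> y"
  shows "2 * ln y \<le> y - 1 / y"
proof -
  let ?g = "\<lambda>y::real. y - 1 / y - 2 * ln y"
  have "?g 1 \<le> ?g y"
  proof (rule deriv_nonneg_imp_mono[where g = ?g and g' = "\<lambda>y. (1 - 1 / y)\<^sup>2" and a = 1 and b = y])
    fix t :: real assume "t \<in> {1..y}"
    then show "(?g has_real_derivative (1 - 1 / t)\<^sup>2) (at t)"
      by (auto intro!: derivative_eq_intros simp: power2_eq_square field_simps)
  qed (use assms in simp_all)
  then show ?thesis by simp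
qed

definition stirling_rem :: "nat \<Rightarrow> real" where
  "stirling_rem n = ln (fact n) + real n - (real n + 1/2) * ln (real n)"

lemma exp_stirling_rem:
  assumes "1 \<le> n"
  shows "exp (stirling_rem n) = fact n * exp (real n) / (real n ^ n * sqrt (real n))"
proof -
  have "exp ((real n + 1/2) * ln (real n)) = real n powr (real n + 1/2)"
    using assms by (simp add: powr_def)
  also have "\<dots> = real n ^ n * sqrt (real n)"
    using assms by (simp add: powr_add powr_realpow powr_half_sqrt)
  finally show ?thesis
    unfolding stirling_rem_def by (simp add: exp_diff exp_add)
qed

lemma stirling_rem_diff:
  assumes "1 \<le> n"
  shows "stirling_rem n - stirling_rem (Suc n) = (real n + 1/2) * ln ((real n + 1) / real n) - 1"
proof -
  have "ln (fact (Suc n) :: real) = ln (real n + 1) + ln (fact n)"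
    by (simp add: ln_mult add.commute)
  then show ?thesis
    using assms unfolding stirling_rem_def by (simp add: ln_div algebra_simps)
qed

lemma stirling_rem_Suc_le:
  assumes "1 \<le> n"
  shows "stirling_rem (Suc n) \<le> stirling_rem n"
proof -
  have "2 * ((real n + 1) / real n - 1) / ((real n + 1) / real n + 1) = 1 / (real n + 1/2)"
    using assms by (simp add: field_simps)
  then have "1 / (real n + 1/2) \<le> ln ((real n + 1) / real n)"
    using ln_ge_two_mult_diff_div_add[of "(real n + 1) / real n"] assms by simp
  then have "1 \<le> (real n + 1/2) * ln ((real n + 1) / real n)"
    by (simp add: field_simps)
  then show ?thesis using stirling_rem_diff[OF assms] by simp
qed

lemma stirling_rem_Suc_ge:
  assumes "1 \<le> n"
  shows "stirling_rem n - 1 / (4 * real n) \<le> stirling_rem (Suc n) - 1 / (4 * (real n + 1))"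
proof -
  have "(real n + 1) / real n - 1 / ((real n + 1) / real n) = (2 * real n + 1) / (real n * (real n + 1))"
    using assms by (simp add: field_simps)
  then have "2 * ln ((real n + 1) / real n) \<le> (2 * real n + 1) / (real n * (real n + 1))"
    using two_mult_ln_le_diff_inverse[of "(real n + 1) / real n"] assms by simp
  then have "(real n + 1/2) * (2 * ln ((real n + 1) / real n))
      \<le> (real n + 1/2) * ((2 * real n + 1) / (real n * (real n + 1)))"
    by (intro mult_left_mono) auto
  also have "\<dots> = 2 * (1 + 1 / (4 * real n) - 1 / (4 * (real n + 1)))"
    using assms by (simp add: field_simps add_nonneg_eq_0_iff)
  finally show ?thesis using stirling_rem_diff[OF assms] by simp
qed

lemma stirling_rem_antimono:
  assumes "1 \<le> k" "k \<le> n"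
  shows "stirling_rem n \<le> stirling_rem k"
  using assms(2)
proof (induction n rule: dec_induct)
  case (step m)
  with assms(1) stirling_rem_Suc_le[of m] show ?case by simp
qed simp

lemma stirling_rem_lower_bound:
  assumes "1 \<le> n"
  shows "stirling_rem 1 - 1/4 + 1 / (4 * real n) \<le> stirling_rem n"
  using assms
proof (induction n rule: dec_induct)
  case (step m)
  with stirling_rem_Suc_ge[of m] show ?case by (simp add: algebra_simps)
qed simp

lemma wallis_product_eq:
  "(\<Prod>k=1..n. 4 * real k ^ 2 / (4 * real k ^ 2 - 1))
     = (2 ^ n * fact n) ^ 4 / ((fact (2 * n)) ^ 2 * (2 * real n + 1))"
proof (induction n)
  case (Suc n)
  have step: "(2 * c * F) ^ 4 / ((2 * c * a * G) ^ 2 * b) = F ^ 4 / (G ^ 2 * a) * (4 * c ^ 2 / (a * b))"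
    if "a > 0" "b > 0" "c > 0" "F > 0" "G > 0" for a b c F G :: real
    using that by (simp add: field_simps power2_eq_square power4_eq_xxxx)
  have "4 * (1 + real n) ^ 2 - 1 = (2 * real n + 1) * (2 * real n + 3)"
    by (simp add: algebra_simps power2_eq_square)
  then have "(\<Prod>k=1..Suc n. 4 * real k ^ 2 / (4 * real k ^ 2 - 1))
      = (2 ^ n * fact n) ^ 4 / ((fact (2 * n)) ^ 2 * (2 * real n + 1))
        * (4 * (1 + real n) ^ 2 / ((2 * real n + 1) * (2 * real n + 3)))"
    using Suc by simp
  also have "\<dots> = (2 * (1 + real n) * (2 ^ n * fact n)) ^ 4
      / ((2 * (1 + real n) * (2 * real n + 1) * fact (2 * n)) ^ 2 * (2 * real n + 3))"
    by (rule step[symmetric]) auto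
  also have "\<dots> = (2 ^ Suc n * fact (Suc n)) ^ 4 / ((fact (2 * Suc n)) ^ 2 * (2 * real (Suc n) + 1))"
    by (simp add: algebra_simps)
  finally show ?case .
qed simp

lemma ln_wallis_product_eq:
  assumes "1 \<le> n"
  shows "ln (\<Prod>k=1..n. 4 * real k ^ 2 / (4 * real k ^ 2 - 1))
    = 4 * stirling_rem n - 2 * stirling_rem (2 * n) + ln (real n / (2 * real n + 1)) - ln 2"
proof -
  have "ln ((2 ^ n * fact n) ^ 4 / ((fact (2 * n)) ^ 2 * (2 * real n + 1)) :: real)
      = 4 * (real n * ln 2 + ln (fact n)) - 2 * ln (fact (2 * n)) - ln (2 * real n + 1)"
    by (simp add: ln_div ln_mult ln_realpow)
  moreover have "ln (fact n :: real) = stirling_rem n - real n + (real n + 1/2) * ln (real n)"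
    by (simp add: stirling_rem_def)
  moreover have "ln (fact (2 * n) :: real)
      = stirling_rem (2 * n) - 2 * real n + (2 * real n + 1/2) * (ln 2 + ln (real n))"
    using assms by (simp add: stirling_rem_def ln_mult)
  moreover have "ln (real n / (2 * real n + 1)) = ln (real n) - ln (2 * real n + 1)"
    using assms by (simp add: ln_div)
  ultimately show ?thesis
    unfolding wallis_product_eq by (simp add: algebra_simps)
qed

lemma convergent_stirling_rem: "convergent stirling_rem"
proof -
  have "decseq (\<lambda>n. stirling_rem (Suc n))"
    by (rule decseq_SucI) (simp add: stirling_rem_Suc_le)
  moreover have "\<forall>n. stirling_rem 1 - 1/4 \<le> stirling_rem (Suc n)"
  proof
    fix n
    have "0 \<le> 1 / (4 * real (Suc n))"
      by simp
    with stirling_rem_lower_bound[of "Suc n"] show "stirling_rem 1 - 1/4 \<le> stirling_rem (Suc n)"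
      by linarith
  qed
  ultimately obtain L where "(\<lambda>n. stirling_rem (Suc n)) \<longlonglongrightarrow> L"
    using decseq_convergent by blast
  then show ?thesis
    unfolding convergent_def by (blast intro: LIMSEQ_imp_Suc)
qed

lemma stirling_rem_tendsto: "stirling_rem \<longlonglongrightarrow> ln (2 * pi) / 2"
proof -
  obtain L where L: "stirling_rem \<longlonglongrightarrow> L"
    using convergent_stirling_rem unfolding convergent_def by blast
  have "(\<lambda>n. stirling_rem (2 * n)) \<longlonglongrightarrow> L"
    using LIMSEQ_subseq_LIMSEQ[OF L, of "\<lambda>n. 2 * n"] by (simp add: strict_mono_def o_def)
  moreover have "(\<lambda>n. ln (real n / (2 * real n + 1))) \<longlonglongrightarrow> ln (1 / 2)"
    by real_asymp
  ultimately have "(\<lambda>n. 4 * stirling_rem n - 2 * stirling_rem (2 * n) + ln (real n / (2 * real n + 1)) - ln 2)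
      \<longlonglongrightarrow> 4 * L - 2 * L + ln (1 / 2) - ln 2"
    by (intro tendsto_diff tendsto_add tendsto_mult_left L tendsto_const)
  moreover have "eventually (\<lambda>n. 4 * stirling_rem n - 2 * stirling_rem (2 * n)
      + ln (real n / (2 * real n + 1)) - ln 2 = ln (\<Prod>k=1..n. 4 * real k ^ 2 / (4 * real k ^ 2 - 1))) sequentially"
    using eventually_ge_at_top[of 1] by eventually_elim (rule ln_wallis_product_eq [symmetric])
  ultimately have "(\<lambda>n. ln (\<Prod>k=1..n. 4 * real k ^ 2 / (4 * real k ^ 2 - 1)))
      \<longlonglongrightarrow> 4 * L - 2 * L + ln (1 / 2) - ln 2"
    by (rule Lim_transform_eventually)
  moreover have "(\<lambda>n. ln (\<Prod>k=1..n. 4 * real k ^ 2 / (4 * real k ^ 2 - 1))) \<longlonglongrightarrow> ln (pi / 2)"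
    by (intro tendsto_ln wallis) simp
  ultimately have "ln (pi / 2) = 2 * L + ln (1 / 2) - ln 2"
    using LIMSEQ_unique by fastforce
  then have "L = ln (2 * pi) / 2"
    by (simp add: ln_div ln_mult)
  with L show ?thesis by simp
qed

lemma stirling_rem_ge:
  assumes "1 \<le> n"
  shows "ln (2 * pi) / 2 \<le> stirling_rem n"
  using stirling_rem_tendsto by (rule LIMSEQ_le_const2) (use assms stirling_rem_antimono in blast)

lemma power_le_exp_mult:
  fixes x :: real
  assumes "0 \<le> x"
  shows "x ^ k \<le> real k ^ k * exp (x - real k)"
proof (cases "k = 0")
  case True
  with assms show ?thesis by simp
next
  case False
  have "x / real k \<le> exp (x / real k - 1)"
    using exp_ge_add_one_self[of "x / real k - 1"] by simp
  then have "(x / real k) ^ k \<le> exp (x / real k - 1) ^ k"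
    using assms by (intro power_mono) auto
  also have "\<dots> = exp (x - real k)"
    using False by (simp flip: exp_of_nat_mult add: field_simps)
  finally show ?thesis
    using False by (simp add: power_divide field_simps)
qed

lemma power_mult_power_le:
  fixes x y :: real
  assumes "0 \<le> x" "0 \<le> y" "x + y = real (k + m)"
  shows "x ^ k * y ^ m \<le> real k ^ k * real m ^ m"
proof -
  have "x ^ k * y ^ m \<le> (real k ^ k * exp (x - real k)) * (real m ^ m * exp (y - real m))"
    using assms by (intro mult_mono power_le_exp_mult) auto
  also have "\<dots> = real k ^ k * real m ^ m"
    using assms(3) by (simp flip: exp_add)
  finally show ?thesis .
qed

lemma binomial_le_stirling:
  assumes "1 \<le> k" "k < n"
  shows "real (n choose k) \<le> real n ^ n * sqrt (real n)
    / (sqrt (2 * pi) * (real k ^ k * sqrt (real k)) * (real (n - k) ^ (n - k) * sqrt (real (n - k))))"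
proof -
  define m where "m = n - k"
  have km: "1 \<le> m" "n = k + m"
    using assms by (auto simp: m_def)
  define P where "P j = real j ^ j * sqrt (real j) / exp (real j)" for j
  have fact_eq: "fact j = exp (stirling_rem j) * P j" if "1 \<le> j" for j
    using exp_stirling_rem[OF that] that by (simp add: P_def field_simps)
  have "P n / (P k * P m) > 0"
    using assms km by (simp add: P_def)
  have "real (n choose k) = fact n / (fact k * fact m)"
    using assms by (simp add: binomial_fact m_def)
  also have "\<dots> = exp (stirling_rem n - stirling_rem k - stirling_rem m) * (P n / (P k * P m))"
    using assms km by (simp add: fact_eq exp_diff)
  also have "\<dots> \<le> exp (- (ln (2 * pi) / 2)) * (P n / (P k * P m))"
    using stirling_rem_antimono[of k n] stirling_rem_ge[OF km(1)] assms \<open>P n / (P k * P m) > 0\<close>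
    by (intro mult_right_mono) auto
  also have "exp (- (ln (2 * pi) / 2)) = 1 / sqrt (2 * pi)"
    using powr_half_sqrt[of "2 * pi"] by (simp add: powr_def exp_minus field_simps)
  also have "P n / (P k * P m) = real n ^ n * sqrt (real n) / ((real k ^ k * sqrt (real k)) * (real m ^ m * sqrt (real m)))"
    unfolding P_def km(2) by (simp add: exp_add)
  finally show ?thesis
    by (simp add: m_def)
qed

lemma binomial_mult_power_le:
  fixes a :: real
  assumes "a > 0" "1 \<le> k" "k < n"
  shows "real (n choose k) * a ^ k
    \<le> (1 + a) ^ n * sqrt (real n) / (sqrt (2 * pi) * sqrt (real k * real (n - k)))"
proof -
  define m where "m = n - k"
  have km: "1 \<le> m" "n = k + m"
    using assms by (auto simp: m_def)
  have "a * (real n / (1 + a)) + real n / (1 + a) = (1 + a) * real n / (1 + a)"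
    by (simp add: algebra_simps add_divide_distrib)
  also have "\<dots> = real (k + m)"
    using assms km by simp
  finally have "(a * (real n / (1 + a))) ^ k * (real n / (1 + a)) ^ m \<le> real k ^ k * real m ^ m"
    using assms by (intro power_mult_power_le) auto
  moreover have "(a * (real n / (1 + a))) ^ k * (real n / (1 + a)) ^ m = real n ^ n * a ^ k / (1 + a) ^ n"
    unfolding power_mult_distrib mult.assoc power_add [symmetric] km(2) [symmetric]
    by (simp add: power_divide)
  ultimately have mode: "real n ^ n * a ^ k \<le> real k ^ k * real m ^ m * (1 + a) ^ n"
    using assms by (simp add: divide_le_eq)
  define D where "D = sqrt (2 * pi) * (real k ^ k * sqrt (real k)) * (real m ^ m * sqrt (real m))"
  have "D > 0"
    using assms km by (simp add: D_def)
  have "real (n choose k) * a ^ k \<le> real n ^ n * sqrt (real n) / D * a ^ k"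
    using binomial_le_stirling[OF assms(2,3)] assms by (intro mult_right_mono) (auto simp: D_def m_def)
  also have "\<dots> = (real n ^ n * a ^ k) * sqrt (real n) / D"
    by simp
  also have "\<dots> \<le> (real k ^ k * real m ^ m * (1 + a) ^ n) * sqrt (real n) / D"
    using mode \<open>D > 0\<close> by (intro divide_right_mono mult_right_mono) auto
  also have "\<dots> = (1 + a) ^ n * sqrt (real n) / (sqrt (2 * pi) * sqrt (real k * real m))"
    using assms km by (simp add: D_def real_sqrt_mult field_simps)
  finally show ?thesis
    by (simp add: m_def)
qed

lemma N_bound_le_imp_less:
  assumes "int n \<ge> N_bound a lam"
  shows "a / lam < real n" "1 / (lam * a) < real n"
proof -
  have "\<lfloor>a / lam\<rfloor> < int n" "\<lfloor>1 / (lam * a)\<rfloor> < int n"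
    using assms by (auto simp: N_bound_def)
  then show "a / lam < real n" "1 / (lam * a) < real n"
    by (simp_all add: floor_less_iff)
qed

lemma floor_mode_bounds:
  fixes a lam :: real
  assumes "a > 0" "lam < 1" "a < lam * real n" "1 < lam * a * real n"
  defines "k \<equiv> nat \<lfloor>a * (real n + 1) / (a + 1)\<rfloor>"
  shows "1 \<le> k" "k < n" "sqrt a * (real n * (1 - lam)) \<le> (a + 1) * sqrt (real k * real (n - k))"
proof -
  define y where "y = a * (real n + 1) / (a + 1)"
  have "n \<noteq> 0"
    using assms(1,3) by (cases "n = 0") auto
  then have "lam * real n < real n" "lam * (a * real n) < a * real n"
    using assms(1,2) by simp_all
  then have n_gt: "a < real n" "1 < a * real n"
    using assms(3,4) by (simp_all add: mult.assoc)
  have y_eq: "(a + 1) * (y - 1) = a * real n - 1" "(a + 1) * (real n - y) = real n - a"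
    using assms(1) by (simp_all add: y_def field_simps)
  have "0 < (a + 1) * (y - 1)" "0 < (a + 1) * (real n - y)"
    using y_eq n_gt by simp_all
  then have "1 < y" "y < real n"
    using assms(1) by (simp_all add: zero_less_mult_iff)
  then have k: "real k \<le> y" "y - 1 < real k" "1 \<le> k" "k < n"
    unfolding k_def y_def [symmetric] by linarith+
  then show "1 \<le> k" "k < n"
    by simp_all
  have "a * real n * (1 - lam) < (a + 1) * (y - 1)"
    using y_eq(1) assms(4) by (simp add: algebra_simps)
  also have "\<dots> < (a + 1) * real k"
    using k(2) assms(1) by simp
  finally have k_lower: "a * real n * (1 - lam) \<le> (a + 1) * real k"
    by simp
  have "real n * (1 - lam) < (a + 1) * (real n - y)"
    using y_eq(2) assms(3) by (simp add: algebra_simps)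
  also have "\<dots> \<le> (a + 1) * real (n - k)"
    using k(1,4) assms(1) by (simp add: of_nat_diff)
  finally have m_lower: "real n * (1 - lam) \<le> (a + 1) * real (n - k)"
    by simp
  have "a * (real n * (1 - lam)) ^ 2 = (a * real n * (1 - lam)) * (real n * (1 - lam))"
    by (simp add: power2_eq_square)
  also have "\<dots> \<le> ((a + 1) * real k) * ((a + 1) * real (n - k))"
    by (rule mult_mono [OF k_lower m_lower]) (use assms(1,2) in auto)
  also have "\<dots> = (a + 1) ^ 2 * (real k * real (n - k))"
    by (simp add: power2_eq_square)
  finally show "sqrt a * (real n * (1 - lam)) \<le> (a + 1) * sqrt (real k * real (n - k))"
    using real_sqrt_le_mono assms(1,2) n_gt by (fastforce simp: real_sqrt_mult)
qed

lemma binomial_mode_term_le: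
  fixes a lam :: real
  assumes "a > 0" "lam < 1" "a < lam * real n" "1 < lam * a * real n"
  defines "k \<equiv> nat \<lfloor>a * (real n + 1) / (a + 1)\<rfloor>"
  shows "real (n choose k) * a ^ k
    \<le> (a + 1) / (sqrt a * (1 - lam)) / sqrt (2 * pi) * inverse (sqrt (real n)) * (1 + a) ^ n"
proof -
  note mode = floor_mode_bounds[OF assms(1-4), folded k_def]
  have "real n > 0"
    using mode by simp
  have "real (n choose k) * a ^ k
      \<le> (1 + a) ^ n * sqrt (real n) / (sqrt (2 * pi) * sqrt (real k * real (n - k)))"
    using binomial_mult_power_le[OF assms(1) mode(1,2)] .
  also have "\<dots> \<le> (1 + a) ^ n * sqrt (real n) / (sqrt (2 * pi) * (sqrt a * (real n * (1 - lam)) / (a + 1)))"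
  proof -
    have "0 < sqrt a * (real n * (1 - lam)) / (a + 1)"
      using assms(1-4) \<open>real n > 0\<close> by simp
    moreover have "sqrt a * (real n * (1 - lam)) / (a + 1) \<le> sqrt (real k * real (n - k))"
      using mode(3) assms(1) by (simp add: pos_divide_le_eq mult.commute)
    ultimately show ?thesis
      using assms(1) mode by (intro divide_left_mono mult_left_mono mult_pos_pos) auto
  qed
  also have "\<dots> = (a + 1) / (sqrt a * (1 - lam)) / sqrt (2 * pi) * (sqrt (real n) / real n) * (1 + a) ^ n"
    using assms(1-4) \<open>real n > 0\<close> by (simp add: field_simps)
  also have "sqrt (real n) / real n = inverse (sqrt (real n))"
    by (rule sqrt_divide_self_eq) simp
  finally show ?thesis .
qed

theorem proposition11:
  fixes \<alpha> lam :: real and n :: nat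
  assumes "\<alpha> > 0" and "0 < lam" and "lam < 1"
    and "int n \<ge> N_bound \<alpha> lam"
  shows "let k = nat \<lfloor>\<alpha> * (real n + 1) / (\<alpha> + 1)\<rfloor> in
    real (n choose k) * \<alpha> ^ k
      \<le> M_const \<alpha> lam / sqrt (2 * pi) * (real n) powr (-1/2) * (1 + \<alpha>) ^ n"
proof -
  have "\<alpha> < lam * real n" "1 < lam * \<alpha> * real n"
    using N_bound_le_imp_less[OF assms(4)] assms(1,2) by (simp_all add: field_simps)
  then have "let k = nat \<lfloor>\<alpha> * (real n + 1) / (\<alpha> + 1)\<rfloor> in real (n choose k) * \<alpha> ^ k
      \<le> (\<alpha> + 1) / (sqrt \<alpha> * (1 - lam)) / sqrt (2 * pi) * inverse (sqrt (real n)) * (1 + \<alpha>) ^ n"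
    unfolding Let_def by (rule binomial_mode_term_le [OF assms(1,3)])
  moreover have "M_const \<alpha> lam = (\<alpha> + 1) / (sqrt \<alpha> * (1 - lam))"
    by (simp add: M_const_def)
  moreover have "real n powr (-1/2) = inverse (sqrt (real n))"
    by (simp add: powr_minus powr_half_sqrt)
  ultimately show ?thesis
    by simp
qed

end
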